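(* Let $s$ be a Sturmian word with a factorization $s=U_1U_2\cdots U_n\cdots$ into non-empty factors $U_i$ of $s$. If $r_s(U_i)=r_s(U_j)$ for all $i,j\ge 1$, then for every $M>0$ there exists an index $i$ with $|U_i|>M$.
   Context: A Sturmian word is an infinite word $s\in\{a,b\}^{\omega}$ that is aperiodic (not ultimately periodic) and balanced: for all factors $u,v$ of $s$ with $|u|=|v|$ one has $||u|_x-|v|_x|\le 1$ for $x\in\{a,b\}$, where $|u|_x$ is the number of occurrences of $x$ in $u$. A non-empty factor $w$ of $s$ is rich in the letter $z\in\{a,b\}$ if there is a factor $v$ of $s$ with $|v|=|w|$ and $|w|_z>|v|_z$; every non-empty factor of a Sturmian word is rich in exactly one letter, and $r_s(w)\in\{a,b\}$ denotes that letter. *)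

theory Defs
  imports Complex_Main
begin

datatype letter = a | b

type_synonym word = "nat \<Rightarrow> letter"

definition factor :: "letter list \<Rightarrow> word \<Rightarrow> bool" where
  "factor w s \<longleftrightarrow> (\<exists>i. w = map s [i..<i + length w])"

definition occ :: "letter list \<Rightarrow> letter \<Rightarrow> nat" where
  "occ u x = length (filter (\<lambda>y. y = x) u)"

definition balanced :: "word \<Rightarrow> bool" where
  "balanced s \<longleftrightarrow> (\<forall>u v x. factor u s \<and> factor v s \<and> length u = length v \<longrightarrow>
      \<bar>int (occ u x) - int (occ v x)\<bar> \<le> 1)"

definition ultimately_periodic :: "word \<Rightarrow> bool" where
  "ultimately_periodic s \<longleftrightarrow> (\<exists>p>0. \<exists>n0. \<forall>n\<ge>n0. s (n + p) = s n)"

definition sturmian :: "word \<Rightarrow> bool" where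
  "sturmian s \<longleftrightarrow> balanced s \<and> \<not> ultimately_periodic s"

definition rich_in :: "word \<Rightarrow> letter list \<Rightarrow> letter \<Rightarrow> bool" where
  "rich_in s w z \<longleftrightarrow> w \<noteq> [] \<and> factor w s \<and>
     (\<exists>v. factor v s \<and> length v = length w \<and> occ w z > occ v z)"

text \<open>r_s(w): the (unique) letter in which w is rich.\<close>
definition rich_letter :: "word \<Rightarrow> letter list \<Rightarrow> letter" where
  "rich_letter s w = (THE z. rich_in s w z)"

text \<open>s = U 0 U 1 U 2 ... : U i occupies positions starting at the total length of U 0..U (i-1).\<close>
definition factorization :: "word \<Rightarrow> (nat \<Rightarrow> letter list) \<Rightarrow> bool" where
  "factorization s U \<longleftrightarrow> (\<forall>i. U i \<noteq> []) \<and>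
     (\<forall>i j. j < length (U i) \<longrightarrow> U i ! j = s ((\<Sum>k<i. length (U k)) + j))"

end

theory Submission
  imports Defs "HOL-Library.Infinite_Set"
begin

text \<open>Write \<open>weight s z i n\<close> for the number of letters \<open>z\<close> in the factor of length \<open>n\<close> at
position \<open>i\<close> and \<open>H n\<close> for its maximum over \<open>i\<close>. A factor rich in \<open>z\<close> has weight \<open>H\<close>, so if
all blocks \<open>U\<^sub>i\<close> are rich in \<open>z\<close>, a prefix \<open>U\<^sub>0\<cdots>U\<^sub>m\<^sub>-\<^sub>1\<close> has weight \<open>\<Sum> H(|U\<^sub>i|)\<close>, the largest
value that any concatenation of windows of these lengths can have. Aperiodicity gives
infinitely many positions of weight \<open>H n - 1\<close>; two of them congruent modulo \<open>n\<close> yield a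
window of length \<open>k n\<close> of weight at most \<open>k H n - 2\<close>. If some length \<open>n\<close> occurred at least
\<open>k\<close> times among the blocks, a window of the same length as the prefix would therefore
weigh at least 2 less than the prefix, contradicting balance. So every length occurs only
finitely often, and the block lengths are unbounded.\<close>

definition weight :: "word \<Rightarrow> letter \<Rightarrow> nat \<Rightarrow> nat \<Rightarrow> nat" where
  "weight s z i n = occ (map s [i..<i+n]) z"

definition max_weight :: "word \<Rightarrow> letter \<Rightarrow> nat \<Rightarrow> nat" where
  "max_weight s z n = Max (range (\<lambda>i. weight s z i n))"

lemma occ_append: "occ (u @ v) z = occ u z + occ v z"
  by (simp add: occ_def)

lemma occ_a_plus_occ_b: "occ u a + occ u b = length u"
proof (induction u)
  case (Cons x u)
  then show ?case by (cases x) (auto simp: occ_def)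
qed (simp add: occ_def)

lemma factor_map_upt: "factor (map s [i..<i+n]) s"
  unfolding factor_def by auto

lemma factor_iff_map_upt: "factor w s \<longleftrightarrow> (\<exists>i. w = map s [i..<i + length w])"
  by (simp add: factor_def)

lemma weight_0 [simp]: "weight s z i 0 = 0"
  by (simp add: weight_def occ_def)

lemma weight_1: "weight s z i (Suc 0) = (if s i = z then 1 else 0)"
  by (simp add: weight_def occ_def)

lemma weight_add: "weight s z i (m + n) = weight s z i m + weight s z (i + m) n"
  unfolding weight_def using upt_add_eq_append[of i "i + m" n]
  by (simp add: add.assoc occ_append)

lemma weight_le_length: "weight s z i n \<le> n"
  unfolding weight_def occ_def by (metis add_diff_cancel_left' length_filter_le length_map length_upt)

lemma finite_range_weight: "finite (range (\<lambda>i. weight s z i n))"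
  by (rule finite_subset[of _ "{..n}"]) (auto simp: weight_le_length)

lemma weight_le_max_weight: "weight s z i n \<le> max_weight s z n"
  unfolding max_weight_def using finite_range_weight by (intro Max_ge) auto

lemma max_weight_attained: "\<exists>i. weight s z i n = max_weight s z n"
proof -
  have "max_weight s z n \<in> range (\<lambda>i. weight s z i n)"
    unfolding max_weight_def using finite_range_weight by (intro Max_in) auto
  then show ?thesis by auto
qed

lemma balanced_weight_le:
  assumes "balanced s"
  shows "weight s z i n \<le> weight s z j n + 1"
proof -
  have "\<bar>int (weight s z i n) - int (weight s z j n)\<bar> \<le> 1"
    using assms factor_map_upt[of s] unfolding balanced_def weight_def by simp
  then show ?thesis by linarith
qed

lemma weight_sum_le:
  "finite B \<Longrightarrow> weight s z i (\<Sum>k\<in>B. f k) \<le> (\<Sum>k\<in>B. max_weight s z (f k))"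
proof (induction B arbitrary: i rule: finite_induct)
  case (insert k B)
  have "weight s z i (\<Sum>k\<in>insert k B. f k) = weight s z i (f k) + weight s z (i + f k) (\<Sum>k\<in>B. f k)"
    using insert.hyps by (simp add: weight_add)
  also have "\<dots> \<le> max_weight s z (f k) + (\<Sum>k\<in>B. max_weight s z (f k))"
    using weight_le_max_weight insert.IH by (rule add_mono)
  finally show ?case using insert.hyps by simp
qed simp

lemma weight_mult_le: "weight s z i (k * n) \<le> k * max_weight s z n"
  using weight_sum_le[of "{..<k}" s z i "\<lambda>_. n"] by simp

text \<open>A window sliding by one position keeps its weight only if the letter dropped equals
the letter added.\<close>

lemma eventually_constant_weight_imp_ultimately_periodic:
  assumes "n > 0" and "\<forall>i\<ge>p. weight s z i n = c"
  shows "ultimately_periodic s"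
proof -
  have "s (i + n) = s i" if "i \<ge> p" for i
  proof -
    have "weight s z i n + weight s z (i + n) 1 = weight s z i 1 + weight s z (Suc i) n"
      using weight_add[of s z i n 1] weight_add[of s z i 1 n] by simp
    moreover have "weight s z i n = weight s z (Suc i) n" using assms(2) that by simp
    ultimately have "(s (i + n) = z) = (s i = z)" by (simp add: weight_1 split: if_splits)
    then show ?thesis by (cases "s (i + n)"; cases "s i"; cases z) auto
  qed
  then show ?thesis unfolding ultimately_periodic_def using assms(1) by (metis add.commute)
qed

lemma light_positions_unbounded:
  assumes "\<not> ultimately_periodic s" and "n > 0"
  shows "\<exists>l\<ge>p. weight s z l n < max_weight s z n"
proof (rule ccontr)
  assume "\<not> ?thesis"
  then have "\<forall>i\<ge>p. weight s z i n = max_weight s z n"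
    using weight_le_max_weight[of s z _ n] by (metis le_antisym not_le)
  then show False
    using eventually_constant_weight_imp_ultimately_periodic[OF assms(2)] assms(1) by blast
qed

lemma light_window:
  assumes "\<not> ultimately_periodic s" and "n > 0"
  shows "\<exists>l k. weight s z l (k * n) + 2 \<le> k * max_weight s z n"
proof -
  define light where "light = {l. weight s z l n < max_weight s z n}"
  have "infinite light"
    unfolding light_def infinite_nat_iff_unbounded_le using light_positions_unbounded[OF assms] by blast
  moreover have "finite ((\<lambda>l. l mod n) ` light)"
    by (rule finite_subset[of _ "{..<n}"]) (auto simp: assms(2))
  ultimately obtain r where inf: "infinite {l\<in>light. l mod n = r}"
    using pigeonhole_infinite[of light "\<lambda>l. l mod n"] by auto
  then have "{l\<in>light. l mod n = r} \<noteq> {}" by (metis finite.emptyI)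
  then obtain l1 where l1: "l1 \<in> light" "l1 mod n = r" by blast
  obtain l2 where l2: "l2 > l1" "l2 \<in> light" "l2 mod n = r"
    using inf unfolding infinite_nat_iff_unbounded by blast
  have "n dvd l2 - l1" using l1(2) l2 mod_eq_dvd_iff_nat[of l1 l2 n] by simp
  then obtain k where "l2 - l1 = n * k" by blast
  with l2(1) obtain k' where "l2 - l1 = n * Suc k'" by (cases k) auto
  then have l2_eq: "l2 = l1 + n + k' * n" using l2(1) by (simp add: algebra_simps)
  have "weight s z l1 (Suc (Suc k') * n) = weight s z l1 n + weight s z (l1 + n) (k' * n) + weight s z l2 n"
    using weight_add[of s z l1 n "k' * n + n"] weight_add[of s z "l1 + n" "k' * n" n] l2_eq
    by (simp add: add.assoc add.commute)
  moreover have "weight s z l1 n < max_weight s z n" "weight s z l2 n < max_weight s z n"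
    using l1(1) l2(2) unfolding light_def by auto
  moreover have "weight s z (l1 + n) (k' * n) \<le> k' * max_weight s z n"
    by (rule weight_mult_le)
  ultimately show ?thesis by (intro exI[of _ l1] exI[of _ "Suc (Suc k')"]) simp
qed

lemma rich_in_unique:
  assumes "balanced s" "rich_in s w z" "rich_in s w z'"
  shows "z = z'"
proof (rule ccontr)
  assume "z \<noteq> z'"
  obtain v where v: "factor v s" "length v = length w" "occ w z > occ v z"
    using assms(2) unfolding rich_in_def by auto
  obtain v' where v': "factor v' s" "length v' = length w" "occ w z' > occ v' z'"
    using assms(3) unfolding rich_in_def by auto
  have "\<bar>int (occ v a) - int (occ v' a)\<bar> \<le> 1"
    using assms(1) v v' unfolding balanced_def by auto
  then show False
    using \<open>z \<noteq> z'\<close> v v' occ_a_plus_occ_b[of v] occ_a_plus_occ_b[of v'] occ_a_plus_occ_b[of w]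
    by (cases z; cases z') auto
qed

text \<open>If \<open>w\<close> were rich in neither letter, every factor of its length would have the same
number of \<open>a\<close>'s as \<open>w\<close>.\<close>

lemma rich_in_exists:
  assumes "\<not> ultimately_periodic s" "factor w s" "w \<noteq> []"
  shows "\<exists>z. rich_in s w z"
proof (rule ccontr)
  assume none: "\<not> ?thesis"
  have "weight s a j (length w) = occ w a" for j
  proof -
    let ?v = "map s [j..<j + length w]"
    have "occ w a \<le> occ ?v a" "occ w b \<le> occ ?v b"
      using none assms(2,3) factor_map_upt[of s j "length w"] unfolding rich_in_def
      by (auto simp: not_less)
    then show ?thesis
      unfolding weight_def using occ_a_plus_occ_b[of ?v] occ_a_plus_occ_b[of w] by simp
  qed
  then show False
    using eventually_constant_weight_imp_ultimately_periodic[of "length w" 0] assms by auto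
qed

lemma rich_in_rich_letter:
  assumes "sturmian s" "factor w s" "w \<noteq> []"
  shows "rich_in s w (rich_letter s w)"
proof -
  obtain z where "rich_in s w z" using rich_in_exists assms unfolding sturmian_def by blast
  moreover have "balanced s" using assms(1) unfolding sturmian_def by simp
  ultimately show ?thesis
    unfolding rich_letter_def by (metis rich_in_unique theI)
qed

lemma rich_in_occ_eq_max_weight:
  assumes "balanced s" "rich_in s w z"
  shows "occ w z = max_weight s z (length w)"
proof -
  obtain v where v: "factor v s" "length v = length w" "occ v z < occ w z"
    using assms(2) unfolding rich_in_def by auto
  obtain i j where "w = map s [i..<i + length w]" "v = map s [j..<j + length w]"
    using assms(2) v(1,2) unfolding rich_in_def factor_iff_map_upt by metis
  then have "occ w z = weight s z i (length w)" "weight s z j (length w) < occ w z"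
    using v(3) unfolding weight_def by auto
  moreover obtain m where "weight s z m (length w) = max_weight s z (length w)"
    using max_weight_attained by blast
  ultimately show ?thesis
    using balanced_weight_le[OF assms(1), of z m "length w" j]
      weight_le_max_weight[of s z i "length w"] by linarith
qed

lemma factorization_block:
  "factorization s U \<Longrightarrow> U i = map s [(\<Sum>k<i. length (U k))..<(\<Sum>k<i. length (U k)) + length (U i)]"
  unfolding factorization_def by (intro nth_equalityI) auto

lemma factorization_prefix_weight:
  "factorization s U \<Longrightarrow> weight s z 0 (\<Sum>k<m. length (U k)) = (\<Sum>k<m. occ (U k) z)"
proof (induction m)
  case (Suc m)
  then show ?case
    using weight_add[of s z 0 "\<Sum>k<m. length (U k)" "length (U m)"]
    by (simp add: weight_def factorization_block[symmetric])
qed simp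

lemma rich_factorization_finite_length_occurrences:
  assumes "sturmian s" "factorization s U" "\<forall>i. rich_in s (U i) z"
  shows "finite {i. length (U i) = n}"
proof (rule ccontr)
  assume inf: "infinite {i. length (U i) = n}"
  define L where "L i = length (U i)" for i
  have bal: "balanced s" and aper: "\<not> ultimately_periodic s"
    using assms(1) unfolding sturmian_def by auto
  have "n > 0"
    using inf assms(2) unfolding factorization_def by (metis (mono_tags) empty_Collect_eq finite.emptyI length_0_conv neq0_conv)
  then obtain l k where light: "weight s z l (k * n) + 2 \<le> k * max_weight s z n"
    using light_window[OF aper] by blast
  obtain F where F: "finite F" "card F = k" "F \<subseteq> {i. L i = n}"
    using infinite_arbitrarily_large[OF inf] unfolding L_def by blast
  have "F \<noteq> {}" using light F(2) by auto
  define m where "m = Suc (Max F)"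
  define R where "R = {..<m} - F"
  have "F \<subseteq> {..<m}" using F(1) unfolding m_def by (auto simp: less_Suc_eq_le)
  have split: "(\<Sum>i<m. g i) = (\<Sum>i\<in>F. g i) + (\<Sum>i\<in>R. g i)" for g :: "nat \<Rightarrow> nat"
    using sum.subset_diff[OF \<open>F \<subseteq> {..<m}\<close>] unfolding R_def by (simp add: add.commute)
  have sum_F: "(\<Sum>i\<in>F. g (L i)) = k * g n" for g :: "nat \<Rightarrow> nat"
    using F by (simp add: sum.cong[of F F "\<lambda>i. g (L i)" "\<lambda>_. g n"] subset_iff)
  have length_prefix: "(\<Sum>i<m. L i) = k * n + (\<Sum>i\<in>R. L i)"
    using split[of L] sum_F[of id] by simp
  have "weight s z 0 (\<Sum>i<m. L i) = (\<Sum>i<m. max_weight s z (L i))"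
    using factorization_prefix_weight[OF assms(2)] rich_in_occ_eq_max_weight[OF bal] assms(3)
    unfolding L_def by simp
  also have "\<dots> = k * max_weight s z n + (\<Sum>i\<in>R. max_weight s z (L i))"
    using split[of "\<lambda>i. max_weight s z (L i)"] sum_F by simp
  finally have prefix: "weight s z 0 (\<Sum>i<m. L i) = k * max_weight s z n + (\<Sum>i\<in>R. max_weight s z (L i))" .
  have "weight s z l (\<Sum>i<m. L i) = weight s z l (k * n) + weight s z (l + k * n) (\<Sum>i\<in>R. L i)"
    by (simp add: length_prefix weight_add)
  also have "\<dots> + 2 \<le> weight s z 0 (\<Sum>i<m. L i)"
    using light weight_sum_le[of R s z "l + k * n" L] prefix unfolding R_def by simp
  finally show False using balanced_weight_le[OF bal, of z 0 "\<Sum>i<m. L i" l] by linarith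
qed

theorem mainTheorem2:
  fixes s :: word and U :: "nat \<Rightarrow> letter list"
  assumes "sturmian s"
    and "factorization s U"
    and "\<forall>i j. rich_letter s (U i) = rich_letter s (U j)"
  shows "\<forall>M::real. M > 0 \<longrightarrow> (\<exists>i. real (length (U i)) > M)"
proof (intro allI impI, rule ccontr)
  fix M :: real
  assume "\<not> (\<exists>i. real (length (U i)) > M)"
  then have bounded: "length (U i) \<le> nat \<lceil>M\<rceil>" for i by (meson le_nat_iff not_le real_nat_ceiling_ge order_trans of_nat_le_iff)
  have "rich_in s (U i) (rich_letter s (U 0))" for i
    using rich_in_rich_letter[OF assms(1), of "U i"] assms(2,3)
      factorization_block[OF assms(2), of i] factor_map_upt[of s]
    unfolding factorization_def by metis
  then have "finite (\<Union>n\<le>nat \<lceil>M\<rceil>. {i. length (U i) = n})"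
    using rich_factorization_finite_length_occurrences[OF assms(1,2)] by blast
  moreover have "(\<Union>n\<le>nat \<lceil>M\<rceil>. {i. length (U i) = n}) = UNIV"
    using bounded by auto
  ultimately show False by simp
qed

end
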